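(* Suppose $X\mid\theta\sim\mathrm{Poi}(\theta)$ and $\theta\sim G$, where $G$ is a probability measure on $[0,\infty)$ with $\mathbb E_G[\theta^4]\le M$ for some constant $M\ge1$. Let $\hat G$ be any (possibly unbounded) estimator of $G$, i.e., a random probability measure on $[0,\infty)$, independent of $(\theta,X)$. For a probability measure $\tilde G$ on $[0,\infty)$ let $f_{\tilde G}$ be the marginal pmf of $X$ induced by $\tilde G$ (i.e., $f_{\tilde G}(x)=\int e^{-\theta}\theta^x/x!\,d\tilde G(\theta)$) and $\hat\theta_{\tilde G}(x)=(x+1)f_{\tilde G}(x+1)/f_{\tilde G}(x)$. Suppose that for some $\kappa>0$, $\hat\theta_{\hat G}(x)\le x+\kappa$ for all $x\in\mathbb Z_+$ almost surely. Then for any $h>0$ with $G([0,h])>1/2$ and any $K\ge1$, $$\begin{aligned}\mathbb E_G\big[(\hat\theta_G(X)-\hat\theta_{\hat G}(X))^2\big]&\le\big(12(h^2+(K+\kappa)^2)+48(h+K+\kappa)K\big)\Big(\mathbb E_G\big[\mathfrak H^2(f_G,f_{\hat G})\big]+4G((h,\infty))\Big)\\&\quad+2\sqrt2\Big((2h+\kappa)^2+\sqrt{h+3h^2}\Big)\sqrt{\rho_K(G)}+2(1+6\sqrt{15})\sqrt{(\kappa^4+M)\,G((h,\infty))},\end{aligned}$$ where $\rho_K(G)=\mathbb P_G(X\ge K)$.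
   Context: The squared Hellinger distance between pmfs on $\mathbb Z_+$ is $\mathfrak H^2(p,q)=\frac12\sum_{x=0}^\infty(\sqrt{p(x)}-\sqrt{q(x)})^2$. *)

theory Defs
  imports "HOL-Probability.Probability"
begin

definition pois_marg :: "real measure \<Rightarrow> nat \<Rightarrow> real" where
  "pois_marg G x = (\<integral>\<theta>. exp (- \<theta>) * \<theta> ^ x / fact x \<partial>G)"

text \<open>Bayes (Robbins) estimator; division by zero yields 0 (Isabelle convention).\<close>
definition pois_bayes :: "real measure \<Rightarrow> nat \<Rightarrow> real" where
  "pois_bayes G x = (real x + 1) * pois_marg G (x + 1) / pois_marg G x"

definition hellinger_sq :: "(nat \<Rightarrow> real) \<Rightarrow> (nat \<Rightarrow> real) \<Rightarrow> real" where
  "hellinger_sq p q = (1/2) * (\<Sum>x. (sqrt (p x) - sqrt (q x))^2)"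

definition rho :: "real \<Rightarrow> real measure \<Rightarrow> real" where
  "rho K G = (\<Sum>x. if K \<le> real x then pois_marg G x else 0)"

end

theory Submission
  imports Defs
begin

text \<open>
  Split the mixing distribution \<open>G\<close> into its parts on \<open>[0, h]\<close> and \<open>(h, \<infinity>)\<close>, so that the
  marginal is \<open>f = F\<^sub>0 + F\<^sub>1\<close> and \<open>(x + 1) f (x + 1) = m\<^sub>0 x + m\<^sub>1 x\<close> with
  \<open>m\<^sub>i x = (x + 1) F\<^sub>i (x + 1)\<close>, while the estimated marginal \<open>g\<close> and its Bayes rule \<open>b\<close> satisfy
  \<open>(x + 1) g (x + 1) = b x * g x\<close>; below \<open>F\<^sub>i\<close> and \<open>m\<^sub>i\<close> are \<open>marg_moment G A 0\<close> and
  \<open>marg_moment G A 1\<close> for \<open>A = {..h}\<close> and \<open>A = {h<..}\<close>.  By Cauchy-Schwarz in the form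
  \<open>(u + v)\<^sup>2 / (F\<^sub>0 + F\<^sub>1) \<le> u\<^sup>2 / F\<^sub>0 + v\<^sup>2 / F\<^sub>1\<close>, the regret at \<open>x\<close> is at most a bulk term
  \<open>(m\<^sub>0 - b F\<^sub>0)\<^sup>2 / F\<^sub>0\<close> plus a tail term \<open>(m\<^sub>1 - b F\<^sub>1)\<^sup>2 / F\<^sub>1\<close>.

  The tail terms add up to second moments of \<open>G\<close> on \<open>(h, \<infinity>)\<close>, which Cauchy-Schwarz and the
  fourth moment bound \<open>M\<close> control by \<open>sqrt (M G(h, \<infinity>))\<close>.  In the bulk \<open>m\<^sub>0 \<le> h F\<^sub>0\<close> and
  \<open>b x \<le> x + \<kappa>\<close>.  For \<open>x < K\<close> the bulk term is compared with squared differences of square roots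
  of \<open>F\<^sub>0\<close> and \<open>g\<close> at \<open>x\<close> and \<open>x + 1\<close>, whose sum is at most \<open>8/3 H\<^sup>2(f, g) + 4 G(h, \<infinity>)\<close>.  For
  \<open>x \<ge> K\<close> it is at most \<open>(x + \<kappa> + h)\<^sup>2 F\<^sub>0 x\<close>, and Cauchy-Schwarz with the fourth central
  moment \<open>t + 3 t\<^sup>2\<close> of the Poisson distribution bounds the sum of these by a multiple of
  \<open>sqrt \<rho>\<^sub>K\<close>.  The bound holds for every realisation of \<open>Ghat\<close>; the expectation is taken last.
\<close>

section \<open>Elementary inequalities\<close>

lemma power2_add_le_weighted:
  fixes u v e :: real
  assumes "0 < e"
  shows "(u + v) ^ 2 \<le> (1 + e) * u ^ 2 + (1 + 1 / e) * v ^ 2"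
proof -
  have "e * ((1 + e) * u ^ 2 + (1 + 1 / e) * v ^ 2 - (u + v) ^ 2) = (e * u - v) ^ 2"
    using assms by (simp add: field_simps power2_eq_square)
  then have "0 \<le> e * ((1 + e) * u ^ 2 + (1 + 1 / e) * v ^ 2 - (u + v) ^ 2)"
    by simp
  then show ?thesis
    using assms by (simp add: zero_le_mult_iff)
qed

lemma power4_add_le: "((u::real) + v) ^ 4 \<le> 8 * (u ^ 4 + v ^ 4)"
proof -
  have "(u + v) ^ 2 \<le> 2 * (u ^ 2 + v ^ 2)"
    using zero_le_square[of "u - v"] by (simp add: power2_eq_square algebra_simps)
  then have "((u + v) ^ 2) ^ 2 \<le> (2 * (u ^ 2 + v ^ 2)) ^ 2"
    by (intro power_mono) auto
  also have "\<dots> \<le> 8 * (u ^ 4 + v ^ 4)"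
    using zero_le_square[of "u ^ 2 - v ^ 2"] by (simp add: power2_eq_square power4_eq_xxxx algebra_simps)
  finally show ?thesis by simp
qed

lemma power2_sqrt_diff_le:
  fixes a b :: real
  assumes "0 \<le> a" "a \<le> b"
  shows "(sqrt a - sqrt b) ^ 2 \<le> b - a"
proof -
  have "a \<le> sqrt a * sqrt b"
    using assms mult_left_mono[OF real_sqrt_le_mono[OF assms(2)], of "sqrt a"] by simp
  then show ?thesis
    using assms by (simp add: power2_eq_square algebra_simps)
qed

lemma power2_add_divide_le:
  fixes u v F G :: real
  assumes "0 \<le> F" "0 \<le> G" "F = 0 \<Longrightarrow> u = 0" "G = 0 \<Longrightarrow> v = 0"
  shows "(u + v) ^ 2 / (F + G) \<le> u ^ 2 / F + v ^ 2 / G"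
proof (cases "F = 0 \<or> G = 0")
  case True
  then show ?thesis using assms by auto
next
  case False
  then have "0 < F" "0 < G" using assms by auto
  have "(u ^ 2 * G + v ^ 2 * F) * (F + G) - (u + v) ^ 2 * (F * G) = (u * G - v * F) ^ 2"
    by (simp add: power2_eq_square algebra_simps)
  then have "(u + v) ^ 2 * (F * G) \<le> (u ^ 2 * G + v ^ 2 * F) * (F + G)"
    by (smt (verit) zero_le_power2)
  then show ?thesis
    using \<open>0 < F\<close> \<open>0 < G\<close> by (simp add: field_simps)
qed

text \<open>Both sides vanish for \<open>F = 0\<close>, because \<open>S / 0 = 0\<close>.\<close>

lemma mult_power2_divide_sub_eq:
  fixes F S b :: real
  shows "F * (S / F - b) ^ 2 = (S - b * F) ^ 2 / F"
  by (cases "F = 0") (simp_all add: field_simps power2_eq_square)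

lemma power2_sub_divide_le_bounded:
  fixes m F b y h :: real
  assumes "0 \<le> F" "0 \<le> m" "m \<le> h * F" "0 \<le> b" "b \<le> y"
  shows "(m - b * F) ^ 2 / F \<le> (y + h) ^ 2 * F"
proof (cases "F = 0")
  case False
  then have "0 < F" using assms by simp
  have "0 \<le> b * F" "b * F \<le> y * F"
    using assms by (simp_all add: mult_right_mono)
  then have "\<bar>m - b * F\<bar> \<le> (y + h) * F"
    unfolding abs_le_iff distrib_right using assms(2,3) by linarith
  then have "(m - b * F) ^ 2 \<le> ((y + h) * F) ^ 2"
    by (metis abs_ge_zero order_trans power2_abs power_mono)
  then show ?thesis
    using \<open>0 < F\<close> by (simp add: divide_le_eq power2_eq_square mult_ac)
qed simp

lemma power2_sub_divide_le_Cauchy_Schwarz: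
  fixes m F Q b :: real
  assumes "0 \<le> F" "0 \<le> Q" "m ^ 2 \<le> F * Q"
  shows "(m - b * F) ^ 2 / F \<le> 2 * Q + 2 * b ^ 2 * F"
proof (cases "F = 0")
  case False
  then have "0 < F" using assms by simp
  have "(m - b * F) ^ 2 \<le> 2 * m ^ 2 + 2 * (b * F) ^ 2"
    using zero_le_square[of "m + b * F"] by (simp add: power2_eq_square algebra_simps)
  also have "\<dots> \<le> (2 * Q + 2 * b ^ 2 * F) * F"
    using assms(3) by (simp add: power2_eq_square algebra_simps)
  finally show ?thesis
    using \<open>0 < F\<close> by (simp add: divide_le_eq)
qed (use assms in simp)

lemma power2_sub_divide_le_hellinger:
  fixes F F' g g' b s h :: real
  assumes "0 \<le> F" "0 \<le> F'" "0 \<le> g" "0 \<le> g'" "0 \<le> b" "0 < s" "0 \<le> h"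
    and "s * F' \<le> h * F" "s * g' = b * g"
  shows "(s * F' - b * F) ^ 2 / F
    \<le> 6 * (h + b) * s * (sqrt F' - sqrt g') ^ 2 + 3 * (h + b) * b * (sqrt F - sqrt g) ^ 2"
proof (cases "F = 0")
  case True
  then show ?thesis using assms by simp
next
  case False
  then have F: "0 < F" using assms by simp
  \<comment> \<open>in the application \<open>a\<^sup>2\<close> is the posterior mean of \<open>\<theta>\<close> on \<open>[0, h]\<close>\<close>
  define a where "a = sqrt (s * F' / F)"
  have a2: "a ^ 2 = s * F' / F" "0 \<le> a"
    using assms F by (simp_all add: a_def)
  have "sqrt F * a = sqrt (s * F')"
    using F by (simp add: a_def flip: real_sqrt_mult)
  moreover have "sqrt b * sqrt g = sqrt s * sqrt g'"
    using assms(9) by (simp flip: real_sqrt_mult)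
  ultimately have key: "sqrt F * (a - sqrt b)
      = sqrt s * (sqrt F' - sqrt g') - sqrt b * (sqrt F - sqrt g)"
    using assms by (simp add: algebra_simps real_sqrt_mult)
  have "s * F' - b * F = F * (a - sqrt b) * (a + sqrt b)"
    using F a2 assms(5) by (simp add: field_simps power2_eq_square)
  then have "(s * F' - b * F) ^ 2 / F = (sqrt F * (a - sqrt b)) ^ 2 * (a + sqrt b) ^ 2"
    using F by (simp add: power_mult_distrib power2_eq_square)
  also have "\<dots> \<le> (3 * s * (sqrt F' - sqrt g') ^ 2 + 3 / 2 * b * (sqrt F - sqrt g) ^ 2) * (2 * (h + b))"
  proof (rule mult_mono)
    show "(sqrt F * (a - sqrt b)) ^ 2 \<le> 3 * s * (sqrt F' - sqrt g') ^ 2 + 3 / 2 * b * (sqrt F - sqrt g) ^ 2"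
      using power2_add_le_weighted[of 2 "sqrt s * (sqrt F' - sqrt g')" "- (sqrt b * (sqrt F - sqrt g))"] assms
      unfolding key by (simp add: power_mult_distrib)
    have "(a + sqrt b) ^ 2 \<le> 2 * (a ^ 2 + b)"
      using power2_add_le_weighted[of 1 a "sqrt b"] assms by simp
    also have "a ^ 2 \<le> h"
      using F assms(8) by (simp add: a2 divide_le_eq mult.commute)
    finally show "(a + sqrt b) ^ 2 \<le> 2 * (h + b)"
      by simp
  qed (use assms in auto)
  also have "\<dots> = 6 * (h + b) * s * (sqrt F' - sqrt g') ^ 2 + 3 * (h + b) * b * (sqrt F - sqrt g) ^ 2"
    by (simp add: field_simps)
  finally show ?thesis .
qed

lemma power2_sub_divide_le_bulk:
  fixes F F' g g' b y h K \<kappa> :: real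
  assumes "0 \<le> F" "0 \<le> F'" "0 \<le> g" "0 \<le> g'" "0 \<le> y" "0 \<le> h" "1 \<le> K" "0 \<le> \<kappa>"
    and "0 \<le> b" "b \<le> y + \<kappa>" "(y + 1) * F' \<le> h * F" "(y + 1) * g' = b * g"
  shows "((y + 1) * F' - b * F) ^ 2 / F
    \<le> 12 * (h + K + \<kappa>) * K * (sqrt F' - sqrt g') ^ 2 + 9 / 2 * (h ^ 2 + (K + \<kappa>) ^ 2) * (sqrt F - sqrt g) ^ 2
      + (if K \<le> y then (y + \<kappa> + h) ^ 2 * F else 0)"
proof (cases "K \<le> y")
  case True
  have "((y + 1) * F' - b * F) ^ 2 / F \<le> (y + \<kappa> + h) ^ 2 * F"
    using power2_sub_divide_le_bounded[of F "(y + 1) * F'" h b "y + \<kappa>"] assms by simp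
  moreover have "0 \<le> 12 * (h + K + \<kappa>) * K * (sqrt F' - sqrt g') ^ 2 + 9 / 2 * (h ^ 2 + (K + \<kappa>) ^ 2) * (sqrt F - sqrt g) ^ 2"
    using assms by simp
  ultimately show ?thesis
    using True by simp
next
  case False
  have "((y + 1) * F' - b * F) ^ 2 / F
      \<le> 6 * (h + b) * (y + 1) * (sqrt F' - sqrt g') ^ 2 + 3 * (h + b) * b * (sqrt F - sqrt g) ^ 2"
    using assms by (intro power2_sub_divide_le_hellinger) auto
  also have "\<dots> \<le> 12 * (h + K + \<kappa>) * K * (sqrt F' - sqrt g') ^ 2 + 9 / 2 * (h ^ 2 + (K + \<kappa>) ^ 2) * (sqrt F - sqrt g) ^ 2"
  proof (intro add_mono mult_right_mono)
    have "(h + b) * (y + 1) \<le> (h + K + \<kappa>) * (2 * K)"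
      using False assms by (intro mult_mono) auto
    then show "6 * (h + b) * (y + 1) \<le> 12 * (h + K + \<kappa>) * K"
      by (simp add: algebra_simps)
    have "9 / 2 * (h ^ 2 + b ^ 2) - 3 * (h + b) * b = 3 / 2 * (h - b) ^ 2 + 3 * h ^ 2"
      by (simp add: power2_eq_square algebra_simps)
    then have "3 * (h + b) * b \<le> 9 / 2 * (h ^ 2 + b ^ 2)"
      using zero_le_power2[of "h - b"] zero_le_power2[of h] by linarith
    also have "\<dots> \<le> 9 / 2 * (h ^ 2 + (K + \<kappa>) ^ 2)"
      using False assms power_mono[of b "K + \<kappa>" 2] by simp
    finally show "3 * (h + b) * b \<le> 9 / 2 * (h ^ 2 + (K + \<kappa>) ^ 2)" .
  qed simp_all
  finally show ?thesis
    using False by simp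
qed

lemma sqrt_8_mult_le:
  fixes a b :: real
  assumes "0 \<le> a" "0 \<le> b"
  shows "sqrt (8 * (a + b ^ 2)) \<le> 2 * sqrt 2 * (b + sqrt a)"
proof -
  have "sqrt (a + b ^ 2) \<le> sqrt a + sqrt (b ^ 2)"
    using assms by (intro sqrt_add_le_add_sqrt) auto
  then have "sqrt 8 * sqrt (a + b ^ 2) \<le> sqrt 8 * (b + sqrt a)"
    using assms by (intro mult_left_mono) auto
  also have "sqrt 8 * (b + sqrt a) = 2 * sqrt 2 * (b + sqrt a)"
    using real_sqrt_mult[of 4 2] by simp
  finally show ?thesis
    by (simp only: real_sqrt_mult)
qed

lemma tail_constant_le:
  fixes e M k :: real
  assumes "0 \<le> e" "e \<le> 1" "1 \<le> M"
  shows "2 * sqrt (e * M) + 2 * (3 * sqrt (e * M) + (2 * k ^ 2 + 1 / 4) * e)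
    \<le> 2 * (1 + 6 * sqrt 15) * sqrt ((k ^ 4 + M) * e)"
proof -
  define R where "R = sqrt ((k ^ 4 + M) * e)"
  have k4: "0 \<le> k ^ 4"
    by (simp add: zero_le_even_power)
  have ee: "e ^ 2 \<le> e"
    using assms by (simp add: power2_eq_square mult_left_le)
  have "sqrt (e * M) \<le> R"
    unfolding R_def using k4 assms by (intro real_sqrt_le_mono) (simp add: algebra_simps)
  moreover have "k ^ 2 * e \<le> R"
  proof -
    have "(k ^ 2 * e) ^ 2 = k ^ 4 * e ^ 2"
      by (simp add: power_mult_distrib flip: power_mult)
    moreover have "k ^ 4 * e ^ 2 \<le> k ^ 4 * e"
      by (rule mult_left_mono[OF ee k4])
    moreover have "0 \<le> M * e"
      using assms by simp
    ultimately have "(k ^ 2 * e) ^ 2 \<le> (k ^ 4 + M) * e"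
      unfolding distrib_right by linarith
    then show ?thesis
      unfolding R_def using assms by (intro real_le_rsqrt) simp
  qed
  moreover have "e \<le> R"
  proof -
    have "0 \<le> k ^ 4 * e" "e \<le> M * e"
      using k4 assms mult_right_mono[of 1 M e] by simp_all
    then have "e ^ 2 \<le> (k ^ 4 + M) * e"
      using ee unfolding distrib_right by linarith
    then show ?thesis
      unfolding R_def by (rule real_le_rsqrt)
  qed
  moreover have "38 * R \<le> 2 * (1 + 6 * sqrt 15) * R"
  proof -
    have "3 \<le> sqrt 15"
      by (rule real_le_rsqrt) simp
    then show ?thesis
      using \<open>e \<le> R\<close> assms by (intro mult_right_mono) auto
  qed
  ultimately show ?thesis
    using assms unfolding R_def[symmetric] by (simp add: algebra_simps)
qed

lemma bulk_constant_le:
  fixes h K \<kappa> H e :: real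
  assumes "0 \<le> h" "0 \<le> K" "0 \<le> \<kappa>" "0 \<le> H" "0 \<le> e"
  shows "(12 * (h + K + \<kappa>) * K + 9 / 2 * (h ^ 2 + (K + \<kappa>) ^ 2)) * (8 / 3 * H + 4 * e)
    \<le> (12 * (h ^ 2 + (K + \<kappa>) ^ 2) + 48 * (h + K + \<kappa>) * K) * (H + 4 * e)"
proof -
  define X Y where "X = h ^ 2 + (K + \<kappa>) ^ 2" and "Y = (h + K + \<kappa>) * K"
  have "0 \<le> X" "0 \<le> Y"
    using assms by (simp_all add: X_def Y_def)
  then have "0 \<le> Y * H" "0 \<le> Y * e" "0 \<le> X * e"
    using assms by simp_all
  then show ?thesis
    unfolding X_def[symmetric] Y_def[symmetric] mult.assoc[of 12 "h + K + \<kappa>" K]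
      mult.assoc[of 48 "h + K + \<kappa>" K]
    by (simp add: algebra_simps)
qed

lemma ennreal_le_sqrt_if_power2_le:
  fixes X :: ennreal and a b :: real
  assumes "X ^ 2 \<le> ennreal a * ennreal b" "0 \<le> a" "0 \<le> b"
  shows "X \<le> ennreal (sqrt (a * b))"
proof (cases X)
  case (real x)
  then have "x ^ 2 \<le> a * b"
    using assms by (simp add: ennreal_power ennreal_mult'[symmetric])
  then show ?thesis
    using real by (simp add: ennreal_leI real_le_rsqrt)
next
  case top
  then show ?thesis
    using assms by (simp add: ennreal_mult'[symmetric] top_unique)
qed

lemma Cauchy_Schwarz_suminf_weighted:
  fixes w y :: "nat \<Rightarrow> real"
  assumes "\<And>n. 0 \<le> w n" "\<And>n. 0 \<le> y n"
  shows "(\<Sum>n. ennreal (w n * y n)) ^ 2 \<le> (\<Sum>n. ennreal (w n)) * (\<Sum>n. ennreal (w n * y n ^ 2))"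
proof -
  have "ennreal (w n * y n) = ennreal (sqrt (w n)) * ennreal (sqrt (w n) * y n)"
    "ennreal (sqrt (w n)) ^ 2 = ennreal (w n)" "ennreal (sqrt (w n) * y n) ^ 2 = ennreal (w n * y n ^ 2)" for n
    using assms[of n] by (auto simp: ennreal_power power_mult_distrib ennreal_mult'[symmetric] mult_ac)
  then show ?thesis
    using Cauchy_Schwarz_nn_integral[of "\<lambda>n. ennreal (sqrt (w n))" "count_space UNIV"
        "\<lambda>n. ennreal (sqrt (w n) * y n)"]
    by (simp add: nn_integral_count_space_nat)
qed

lemma suminf_Suc_le_ennreal: "(\<Sum>n. f (Suc n)) \<le> (\<Sum>n. f n :: ennreal)"
proof -
  have "f sums ((\<Sum>n. f (Suc n)) + f 0)"
    by (rule sums_Suc[OF summable_sums[OF summableI]])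
  then show ?thesis
    by (simp add: sums_iff)
qed

lemma suminf_ennreal_le_add3:
  fixes p a b c :: "nat \<Rightarrow> real"
  assumes "\<And>n. p n \<le> a n + b n + c n" "\<And>n. 0 \<le> a n" "\<And>n. 0 \<le> b n" "\<And>n. 0 \<le> c n"
  shows "(\<Sum>n. ennreal (p n)) \<le> (\<Sum>n. ennreal (a n)) + (\<Sum>n. ennreal (b n)) + (\<Sum>n. ennreal (c n))"
proof -
  have "ennreal (p n) \<le> ennreal (a n) + ennreal (b n) + ennreal (c n)" for n
    using ennreal_leI[OF assms(1)[of n]] assms(2-4)[of n] by simp
  then have "(\<Sum>n. ennreal (p n)) \<le> (\<Sum>n. ennreal (a n) + ennreal (b n) + ennreal (c n))"
    by (intro suminf_le summableI)
  then show ?thesis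
    by (simp add: suminf_add[OF summableI summableI, symmetric])
qed

lemma (in prob_space) nn_integral_indicator_power2_le:
  assumes "A \<in> events" "f \<in> borel_measurable M" "(\<integral>\<^sup>+t. ennreal (f t ^ 4) \<partial>M) \<le> ennreal B" "0 \<le> B"
  shows "(\<integral>\<^sup>+t. ennreal (indicator A t * f t ^ 2) \<partial>M) \<le> ennreal (sqrt (prob A * B))"
proof (rule ennreal_le_sqrt_if_power2_le)
  have [measurable]: "A \<in> events" "f \<in> borel_measurable M"
    by (fact assms)+
  have "(\<integral>\<^sup>+t. ennreal (indicator A t * f t ^ 2) \<partial>M) ^ 2
      = (\<integral>\<^sup>+t. indicator A t * ennreal (f t ^ 2) \<partial>M) ^ 2"
    by (simp add: ennreal_mult'' ennreal_indicator)
  also have "\<dots> \<le> (\<integral>\<^sup>+t. indicator A t ^ 2 \<partial>M) * (\<integral>\<^sup>+t. ennreal (f t ^ 2) ^ 2 \<partial>M)"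
    by (rule Cauchy_Schwarz_nn_integral) measurable
  also have "\<dots> = ennreal (prob A) * (\<integral>\<^sup>+t. ennreal (f t ^ 4) \<partial>M)"
  proof -
    have "(indicator A t :: ennreal) ^ 2 = indicator A t" for t
      by (simp add: indicator_def)
    then show ?thesis
      by (simp add: ennreal_power emeasure_eq_measure)
  qed
  also have "\<dots> \<le> ennreal (prob A) * ennreal B"
    using assms(3) by (rule mult_left_mono) simp
  finally show "(\<integral>\<^sup>+t. ennreal (indicator A t * f t ^ 2) \<partial>M) ^ 2 \<le> ennreal (prob A) * ennreal B" .
qed (use assms in auto)

lemma hellinger_sq_sums:
  assumes "\<And>x. 0 \<le> p x" "\<And>x. 0 \<le> q x" "summable p" "summable q"
  shows "(\<lambda>x. (sqrt (p x) - sqrt (q x)) ^ 2) sums (2 * hellinger_sq p q)"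
proof -
  have "(sqrt (p x) - sqrt (q x)) ^ 2 \<le> p x + q x" for x
    using assms(1,2)[of x] by (simp add: power2_eq_square algebra_simps)
  then have "summable (\<lambda>x. (sqrt (p x) - sqrt (q x)) ^ 2)"
    by (intro summable_comparison_test[OF _ summable_add[OF assms(3,4)]]) auto
  then show ?thesis
    by (simp add: hellinger_sq_def summable_sums)
qed

lemma hellinger_sq_nonneg:
  assumes "\<And>x. 0 \<le> p x" "\<And>x. 0 \<le> q x" "summable p" "summable q"
  shows "0 \<le> hellinger_sq p q"
  using sums_le[OF _ sums_zero hellinger_sq_sums[OF assms]] by simp

section \<open>Poisson probabilities\<close>

definition pois_pmf :: "real \<Rightarrow> nat \<Rightarrow> real" where
  "pois_pmf t x = exp (- t) * t ^ x / fact x"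

lemma pois_pmf_nonneg: "0 \<le> t \<Longrightarrow> 0 \<le> pois_pmf t x"
  by (simp add: pois_pmf_def)

lemma pois_pmf_sums: "(\<lambda>x. pois_pmf t x) sums 1"
proof -
  have "(\<lambda>x. exp (- t) * (t ^ x /\<^sub>R fact x)) sums (exp (- t) * exp t)"
    by (intro sums_mult exp_converges)
  then show ?thesis
    by (simp add: pois_pmf_def exp_minus divide_simps)
qed

lemma pois_pmf_le_1: "0 \<le> t \<Longrightarrow> pois_pmf t x \<le> 1"
  using sum_le_suminf[OF sums_summable[OF pois_pmf_sums], of "{x}"] pois_pmf_nonneg[of t]
  by (simp add: sums_unique[OF pois_pmf_sums, symmetric])

lemma Suc_mult_pois_pmf: "(real x + 1) * pois_pmf t (Suc x) = t * pois_pmf t x"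
proof -
  have "(fact (Suc x) :: real) = (real x + 1) * fact x"
    by (simp add: algebra_simps)
  then show ?thesis
    by (simp add: pois_pmf_def divide_simps)
qed

lemma power_mult_pois_pmf_le:
  assumes "0 \<le> t"
  shows "t ^ j * pois_pmf t x \<le> pochhammer (real x + 1) j"
proof (induction j arbitrary: x)
  case 0
  then show ?case using pois_pmf_le_1[OF assms] by simp
next
  case (Suc j)
  have "t ^ Suc j * pois_pmf t x = (real x + 1) * (t ^ j * pois_pmf t (Suc x))"
    by (simp flip: Suc_mult_pois_pmf add: mult_ac)
  also have "\<dots> \<le> (real x + 1) * pochhammer (real (Suc x) + 1) j"
    by (intro mult_left_mono Suc.IH) simp
  also have "\<dots> = pochhammer (real x + 1) (Suc j)"
    by (simp add: pochhammer_rec add_ac)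
  finally show ?case .
qed

lemma borel_measurable_pois_pmf [measurable]: "(\<lambda>t. pois_pmf t x) \<in> borel_measurable borel"
  unfolding pois_pmf_def by measurable

lemma sums_pois_pmf_mult_real:
  assumes "(\<lambda>x. pois_pmf t x * q (Suc x)) sums S"
  shows "(\<lambda>x. pois_pmf t x * (real x * q x)) sums (t * S)"
proof -
  have shift: "t * (pois_pmf t x * q (Suc x)) = pois_pmf t (Suc x) * (real (Suc x) * q (Suc x))" for x
  proof -
    have "t * (pois_pmf t x * q (Suc x)) = (t * pois_pmf t x) * q (Suc x)"
      by (simp only: mult.assoc)
    also have "\<dots> = ((real x + 1) * pois_pmf t (Suc x)) * q (Suc x)"
      by (simp only: Suc_mult_pois_pmf)
    also have "\<dots> = pois_pmf t (Suc x) * (real (Suc x) * q (Suc x))"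
      by (simp add: algebra_simps)
    finally show ?thesis .
  qed
  have "(\<lambda>x. pois_pmf t (Suc x) * (real (Suc x) * q (Suc x))) sums (t * S)"
    unfolding shift[symmetric] by (intro sums_mult assms)
  then show ?thesis
    by (subst (asm) sums_Suc_iff) simp
qed

lemma pois_pmf_moment_1: "(\<lambda>x. pois_pmf t x * real x) sums t"
  using sums_pois_pmf_mult_real[of t "\<lambda>_. 1" 1] pois_pmf_sums[of t] by simp

lemma pois_pmf_moment_2: "(\<lambda>x. pois_pmf t x * real x ^ 2) sums (t ^ 2 + t)"
proof -
  have "(\<lambda>x. pois_pmf t x * real x + pois_pmf t x) sums (t + 1)"
    by (intro sums_add pois_pmf_moment_1 pois_pmf_sums)
  then have "(\<lambda>x. pois_pmf t x * real (Suc x)) sums (t + 1)"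
    by (simp add: algebra_simps)
  from sums_pois_pmf_mult_real[OF this] show ?thesis
    by (simp add: power2_eq_square algebra_simps)
qed

lemma pois_pmf_moment_3: "(\<lambda>x. pois_pmf t x * real x ^ 3) sums (t ^ 3 + 3 * t ^ 2 + t)"
proof -
  have "(\<lambda>x. pois_pmf t x * real x ^ 2 + 2 * (pois_pmf t x * real x) + pois_pmf t x)
      sums ((t ^ 2 + t) + 2 * t + 1)"
    by (intro sums_add sums_mult pois_pmf_moment_1 pois_pmf_moment_2 pois_pmf_sums)
  then have "(\<lambda>x. pois_pmf t x * real (Suc x) ^ 2) sums ((t ^ 2 + t) + 2 * t + 1)"
    by (simp add: algebra_simps power2_eq_square)
  from sums_pois_pmf_mult_real[OF this] show ?thesis
    by (simp add: power2_eq_square power3_eq_cube algebra_simps)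
qed

lemma pois_pmf_moment_4: "(\<lambda>x. pois_pmf t x * real x ^ 4) sums (t ^ 4 + 6 * t ^ 3 + 7 * t ^ 2 + t)"
proof -
  have "(\<lambda>x. pois_pmf t x * real x ^ 3 + 3 * (pois_pmf t x * real x ^ 2)
        + 3 * (pois_pmf t x * real x) + pois_pmf t x)
      sums ((t ^ 3 + 3 * t ^ 2 + t) + 3 * (t ^ 2 + t) + 3 * t + 1)"
    by (intro sums_add sums_mult pois_pmf_moment_1 pois_pmf_moment_2 pois_pmf_moment_3 pois_pmf_sums)
  then have "(\<lambda>x. pois_pmf t x * real (Suc x) ^ 3) sums ((t ^ 3 + 3 * t ^ 2 + t) + 3 * (t ^ 2 + t) + 3 * t + 1)"
    by (simp add: algebra_simps power2_eq_square power3_eq_cube)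
  from sums_pois_pmf_mult_real[OF this] show ?thesis
    by (simp add: power2_eq_square power3_eq_cube power4_eq_xxxx algebra_simps)
qed

lemma pois_pmf_central_moment_4: "(\<lambda>x. (real x - t) ^ 4 * pois_pmf t x) sums (t + 3 * t ^ 2)"
proof -
  have "(\<lambda>x. pois_pmf t x * real x ^ 4 - 4 * t * (pois_pmf t x * real x ^ 3)
        + 6 * t ^ 2 * (pois_pmf t x * real x ^ 2) - 4 * t ^ 3 * (pois_pmf t x * real x)
        + t ^ 4 * pois_pmf t x)
      sums ((t ^ 4 + 6 * t ^ 3 + 7 * t ^ 2 + t) - 4 * t * (t ^ 3 + 3 * t ^ 2 + t)
        + 6 * t ^ 2 * (t ^ 2 + t) - 4 * t ^ 3 * t + t ^ 4 * 1)"
    by (intro sums_add sums_diff sums_mult pois_pmf_moment_1 pois_pmf_moment_2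
        pois_pmf_moment_3 pois_pmf_moment_4 pois_pmf_sums)
  then show ?thesis
    by (simp add: power_def numeral_eq_Suc algebra_simps)
qed

lemma pois_pmf_shifted_moment_2:
  "(\<lambda>x. (real x + c) ^ 2 * pois_pmf t x) sums ((t + c) ^ 2 + t)"
proof -
  have "(\<lambda>x. pois_pmf t x * real x ^ 2 + 2 * c * (pois_pmf t x * real x) + c ^ 2 * pois_pmf t x)
      sums ((t ^ 2 + t) + 2 * c * t + c ^ 2 * 1)"
    by (intro sums_add sums_mult pois_pmf_moment_1 pois_pmf_moment_2 pois_pmf_sums)
  then show ?thesis
    by (simp add: power2_eq_square algebra_simps)
qed

lemma suminf_pois_pmf_shifted_moment_4_le:
  assumes "0 \<le> t"
  shows "(\<Sum>x. ennreal ((real x + c) ^ 4 * pois_pmf t x)) \<le> ennreal (8 * (t + 3 * t ^ 2 + (t + c) ^ 4))"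
proof -
  have "(\<lambda>x. 8 * ((real x - t) ^ 4 * pois_pmf t x) + 8 * (t + c) ^ 4 * pois_pmf t x)
      sums (8 * (t + 3 * t ^ 2) + 8 * (t + c) ^ 4 * 1)"
    by (intro sums_add sums_mult pois_pmf_central_moment_4 pois_pmf_sums)
  then have "(\<Sum>x. ennreal (8 * ((real x - t) ^ 4 * pois_pmf t x) + 8 * (t + c) ^ 4 * pois_pmf t x))
      = ennreal (8 * (t + 3 * t ^ 2 + (t + c) ^ 4))"
    by (subst suminf_ennreal_eq) (auto simp: pois_pmf_nonneg assms algebra_simps)
  moreover have "(real x + c) ^ 4 * pois_pmf t x
      \<le> 8 * ((real x - t) ^ 4 * pois_pmf t x) + 8 * (t + c) ^ 4 * pois_pmf t x" for x
    using mult_right_mono[OF power4_add_le[of "real x - t" "t + c"] pois_pmf_nonneg[OF assms]]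
    by (simp add: algebra_simps)
  ultimately show ?thesis
    by (metis (no_types, lifting) ennreal_leI suminf_le summableI)
qed

section \<open>Moments of Poisson mixtures\<close>

definition marg_moment :: "real measure \<Rightarrow> real set \<Rightarrow> nat \<Rightarrow> nat \<Rightarrow> real" where
  "marg_moment N A j x = (\<integral>t. indicator A t * t ^ j * pois_pmf t x \<partial>N)"

lemma pois_marg_eq_marg_moment: "pois_marg N x = marg_moment N UNIV 0 x"
  by (simp add: pois_marg_def marg_moment_def pois_pmf_def)

lemma marg_moment_Suc: "marg_moment N A (Suc j) x = (real x + 1) * marg_moment N A j (Suc x)"
proof -
  have integrand: "indicator A t * t ^ Suc j * pois_pmf t x
      = (real x + 1) * (indicator A t * t ^ j * pois_pmf t (Suc x))" for t :: real
  proof -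
    have "indicator A t * t ^ Suc j * pois_pmf t x = indicator A t * t ^ j * (t * pois_pmf t x)"
      by (simp add: mult_ac)
    also have "\<dots> = indicator A t * t ^ j * ((real x + 1) * pois_pmf t (Suc x))"
      by (simp only: Suc_mult_pois_pmf)
    finally show ?thesis
      by (simp only: mult_ac)
  qed
  then show ?thesis
    by (simp only: marg_moment_def integrand integral_mult_right_zero)
qed

lemma pois_bayes_eq: "pois_bayes N x = marg_moment N UNIV 1 x / pois_marg N x"
  by (simp add: pois_bayes_def pois_marg_eq_marg_moment marg_moment_Suc)

locale pois_mixing = prob_space N for N :: "real measure" +
  assumes sets_N: "sets N = sets borel"
    and AE_nonneg: "AE t in N. 0 \<le> t"
begin

lemma borel_measurable_N:
  assumes "f \<in> borel_measurable borel"
  shows "f \<in> borel_measurable N"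
  by (subst measurable_cong_sets[OF sets_N refl]) (rule assms)

lemma integrable_marg_moment:
  assumes "A \<in> sets borel"
  shows "integrable N (\<lambda>t. indicator A t * t ^ j * pois_pmf t x)"
proof (rule integrable_const_bound[where B = "pochhammer (real x + 1) j"])
  show "AE t in N. norm (indicator A t * t ^ j * pois_pmf t x) \<le> pochhammer (real x + 1) j"
    using AE_nonneg
  proof eventually_elim
    case (elim t)
    then have "0 \<le> t ^ j * pois_pmf t x" "t ^ j * pois_pmf t x \<le> pochhammer (real x + 1) j"
      by (simp_all add: pois_pmf_nonneg power_mult_pois_pmf_le)
    then show ?case
      by (auto simp: indicator_def)
  qed
  have [measurable]: "A \<in> sets borel"
    by (rule assms)
  show "(\<lambda>t. indicator A t * t ^ j * pois_pmf t x) \<in> borel_measurable N"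
    by (rule borel_measurable_N) measurable
qed

lemma marg_moment_nonneg: "0 \<le> marg_moment N A j x"
  unfolding marg_moment_def
  by (rule integral_nonneg_AE) (use AE_nonneg in \<open>auto elim!: eventually_mono simp: pois_pmf_nonneg\<close>)

lemma ennreal_marg_moment:
  assumes "A \<in> sets borel"
  shows "ennreal (marg_moment N A j x) = (\<integral>\<^sup>+t. ennreal (indicator A t * t ^ j * pois_pmf t x) \<partial>N)"
  unfolding marg_moment_def
  by (rule nn_integral_eq_integral[symmetric, OF integrable_marg_moment[OF assms]])
     (use AE_nonneg in \<open>auto elim!: eventually_mono simp: pois_pmf_nonneg\<close>)

lemma marg_moment_add_Compl:
  assumes "A \<in> sets borel"
  shows "marg_moment N A j x + marg_moment N (- A) j x = marg_moment N UNIV j x"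
proof -
  have "- A \<in> sets borel"
    using assms by auto
  then have "marg_moment N A j x + marg_moment N (- A) j x
      = (\<integral>t. indicator A t * t ^ j * pois_pmf t x + indicator (- A) t * t ^ j * pois_pmf t x \<partial>N)"
    unfolding marg_moment_def using assms by (simp add: integrable_marg_moment)
  also have "\<dots> = marg_moment N UNIV j x"
    unfolding marg_moment_def by (rule Bochner_Integration.integral_cong) (auto simp: indicator_def)
  finally show ?thesis .
qed

lemma marg_moment_0_le_pois_marg:
  assumes "A \<in> sets borel"
  shows "marg_moment N A 0 x \<le> pois_marg N x"
  using marg_moment_add_Compl[OF assms, of 0 x] marg_moment_nonneg[of "- A" 0 x]
  unfolding pois_marg_eq_marg_moment by linarith

lemma marg_moment_1_le:
  assumes "A \<in> sets borel" "A \<subseteq> {..h}"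
  shows "marg_moment N A 1 x \<le> h * marg_moment N A 0 x"
  unfolding marg_moment_def integral_mult_right_zero[symmetric]
proof (rule integral_mono_AE)
  show "AE t in N. indicator A t * t ^ 1 * pois_pmf t x \<le> h * (indicator A t * t ^ 0 * pois_pmf t x)"
    using AE_nonneg
  proof eventually_elim
    case (elim t)
    then show ?case
      using assms(2) mult_right_mono[of t h "pois_pmf t x"] by (auto simp: indicator_def pois_pmf_nonneg)
  qed
  show "integrable N (\<lambda>t. indicator A t * t ^ 1 * pois_pmf t x)"
    by (rule integrable_marg_moment[OF assms(1)])
  show "integrable N (\<lambda>t. h * (indicator A t * t ^ 0 * pois_pmf t x))"
    by (intro integrable_mult_right integrable_marg_moment[OF assms(1)])
qed

lemma marg_moment_Cauchy_Schwarz: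
  assumes "A \<in> sets borel"
  shows "(marg_moment N A 1 x) ^ 2 \<le> marg_moment N A 0 x * marg_moment N A 2 x"
proof -
  define u where "u t = ennreal (sqrt (indicator A t * pois_pmf t x))" for t
  define v where "v t = ennreal (t * sqrt (indicator A t * pois_pmf t x))" for t
  have [measurable]: "A \<in> sets borel"
    by (rule assms)
  have u: "u \<in> borel_measurable N" and v: "v \<in> borel_measurable N"
    unfolding u_def v_def by (rule borel_measurable_N, measurable)+
  have uv: "AE t in N. u t * v t = ennreal (indicator A t * t ^ 1 * pois_pmf t x)
      \<and> u t ^ 2 = ennreal (indicator A t * t ^ 0 * pois_pmf t x)
      \<and> v t ^ 2 = ennreal (indicator A t * t ^ 2 * pois_pmf t x)"
    using AE_nonneg
  proof eventually_elim
    case (elim t)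
    define a where "a = indicator A t * pois_pmf t x"
    have a: "0 \<le> a"
      using elim by (simp add: a_def pois_pmf_nonneg)
    have "sqrt a * (t * sqrt a) = t * (sqrt a * sqrt a)"
      by (simp only: mult_ac)
    then have sa: "sqrt a * (t * sqrt a) = t * a"
      using a by simp
    have "u t * v t = ennreal (t * a)"
      unfolding u_def v_def a_def[symmetric] sa[symmetric]
      by (rule ennreal_mult'[symmetric]) (use a in simp)
    moreover have "u t ^ 2 = ennreal a" "v t ^ 2 = ennreal (t ^ 2 * a)"
      unfolding u_def v_def a_def[symmetric] using elim a by (simp_all add: ennreal_power power_mult_distrib)
    ultimately show ?case
      by (simp add: a_def mult_ac)
  qed
  have "(\<integral>\<^sup>+t. u t * v t \<partial>N) = ennreal (marg_moment N A 1 x)"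
    "(\<integral>\<^sup>+t. u t ^ 2 \<partial>N) = ennreal (marg_moment N A 0 x)"
    "(\<integral>\<^sup>+t. v t ^ 2 \<partial>N) = ennreal (marg_moment N A 2 x)"
    unfolding ennreal_marg_moment[OF assms] using uv by (auto intro!: nn_integral_cong_AE elim: eventually_mono)
  then have "ennreal (marg_moment N A 1 x) ^ 2 \<le> ennreal (marg_moment N A 0 x) * ennreal (marg_moment N A 2 x)"
    using Cauchy_Schwarz_nn_integral[OF u v] by simp
  then show ?thesis
    by (simp add: ennreal_power marg_moment_nonneg flip: ennreal_mult')
qed

lemma suminf_marg_moment:
  assumes "A \<in> sets borel" "\<And>x. 0 \<le> q x"
  shows "(\<Sum>x. ennreal (q x * marg_moment N A j x))
    = (\<integral>\<^sup>+t. ennreal (indicator A t * t ^ j) * (\<Sum>x. ennreal (q x * pois_pmf t x)) \<partial>N)"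
proof -
  have [measurable]: "A \<in> sets borel"
    by (rule assms(1))
  have "ennreal (q x * marg_moment N A j x)
      = (\<integral>\<^sup>+t. ennreal (q x * (indicator A t * t ^ j * pois_pmf t x)) \<partial>N)" for x
    unfolding marg_moment_def integral_mult_right_zero[symmetric]
    by (rule nn_integral_eq_integral[symmetric])
       (use AE_nonneg assms integrable_marg_moment[OF assms(1)]
         in \<open>auto elim!: eventually_mono simp: pois_pmf_nonneg\<close>)
  then have "(\<Sum>x. ennreal (q x * marg_moment N A j x))
      = (\<Sum>x. \<integral>\<^sup>+t. ennreal (q x * (indicator A t * t ^ j * pois_pmf t x)) \<partial>N)"
    by simp
  also have "\<dots> = (\<integral>\<^sup>+t. (\<Sum>x. ennreal (q x * (indicator A t * t ^ j * pois_pmf t x))) \<partial>N)"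
    by (rule nn_integral_suminf[symmetric]) (rule borel_measurable_N, measurable)
  also have "\<dots> = (\<integral>\<^sup>+t. ennreal (indicator A t * t ^ j) * (\<Sum>x. ennreal (q x * pois_pmf t x)) \<partial>N)"
  proof (rule nn_integral_cong_AE)
    show "AE t in N. (\<Sum>x. ennreal (q x * (indicator A t * t ^ j * pois_pmf t x)))
        = ennreal (indicator A t * t ^ j) * (\<Sum>x. ennreal (q x * pois_pmf t x))"
      using AE_nonneg
    proof eventually_elim
      case (elim t)
      then have "ennreal (q x * (indicator A t * t ^ j * pois_pmf t x))
          = ennreal (indicator A t * t ^ j) * ennreal (q x * pois_pmf t x)" for x
        by (subst ennreal_mult'[symmetric]) (simp_all add: mult_ac)
      then show ?case
        by simp
    qed
  qed
  finally show ?thesis .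
qed

lemma suminf_ennreal_marg_moment:
  assumes "A \<in> sets borel"
  shows "(\<Sum>x. ennreal (marg_moment N A j x)) = (\<integral>\<^sup>+t. ennreal (indicator A t * t ^ j) \<partial>N)"
proof -
  have one: "AE t in N. (\<Sum>x. ennreal (1 * pois_pmf t x)) = 1"
    using AE_nonneg
  proof eventually_elim
    case (elim t)
    have "(\<Sum>x. ennreal (pois_pmf t x)) = ennreal 1"
      by (rule suminf_ennreal_eq[OF pois_pmf_nonneg[OF elim] pois_pmf_sums])
    then show ?case
      by simp
  qed
  have "(\<Sum>x. ennreal (marg_moment N A j x)) = (\<Sum>x. ennreal (1 * marg_moment N A j x))"
    by simp
  also have "\<dots> = (\<integral>\<^sup>+t. ennreal (indicator A t * t ^ j) * (\<Sum>x. ennreal (1 * pois_pmf t x)) \<partial>N)"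
    by (rule suminf_marg_moment[OF assms]) simp
  also have "\<dots> = (\<integral>\<^sup>+t. ennreal (indicator A t * t ^ j) \<partial>N)"
    by (rule nn_integral_cong_AE) (use one in \<open>auto elim: eventually_mono\<close>)
  finally show ?thesis .
qed

lemma marg_moment_0_sums:
  assumes "A \<in> sets borel"
  shows "(\<lambda>x. marg_moment N A 0 x) sums measure N A"
proof -
  have ind: "ennreal (indicator A t * t ^ 0) = indicator A t" for t :: real
    by (simp add: indicator_def)
  have "(\<Sum>x. ennreal (marg_moment N A 0 x)) = emeasure N A"
    unfolding suminf_ennreal_marg_moment[OF assms] ind by (rule nn_integral_indicator) (simp add: assms sets_N)
  moreover have "(\<lambda>x. ennreal (marg_moment N A 0 x)) sums (\<Sum>x. ennreal (marg_moment N A 0 x))"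
    by (rule summable_sums[OF summableI])
  ultimately have "(\<lambda>x. ennreal (marg_moment N A 0 x)) sums ennreal (measure N A)"
    by (simp only: emeasure_eq_measure)
  then show ?thesis
    by (subst (asm) sums_ennreal) (simp_all add: marg_moment_nonneg)
qed

lemma pois_marg_sums: "pois_marg N sums 1"
proof -
  have "pois_marg N = marg_moment N UNIV 0"
    by (rule ext) (rule pois_marg_eq_marg_moment)
  moreover have "measure N UNIV = 1"
    using prob_space sets_eq_imp_space_eq[OF sets_N] by simp
  ultimately show ?thesis
    using marg_moment_0_sums[of UNIV] by simp
qed

lemma pois_marg_nonneg: "0 \<le> pois_marg N x"
  by (simp add: pois_marg_eq_marg_moment marg_moment_nonneg)

lemma pois_bayes_nonneg: "0 \<le> pois_bayes N x"
  by (simp add: pois_bayes_eq pois_marg_eq_marg_moment marg_moment_nonneg)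

lemma Suc_mult_pois_marg: "(real x + 1) * pois_marg N (Suc x) = pois_bayes N x * pois_marg N x"
proof (cases "pois_marg N x = 0")
  case True
  then show ?thesis
    using marg_moment_Cauchy_Schwarz[of UNIV x] by (simp add: pois_marg_eq_marg_moment marg_moment_Suc)
next
  case False
  then show ?thesis
    by (simp add: pois_bayes_def)
qed

lemma pois_marg_mult_power2_sub_eq:
  assumes "A \<in> sets borel"
  shows "pois_marg N x * (pois_bayes N x - b) ^ 2
    = ((marg_moment N A 1 x - b * marg_moment N A 0 x) + (marg_moment N (- A) 1 x - b * marg_moment N (- A) 0 x)) ^ 2
      / (marg_moment N A 0 x + marg_moment N (- A) 0 x)"
proof -
  have "pois_marg N x = marg_moment N A 0 x + marg_moment N (- A) 0 x"
    "marg_moment N UNIV 1 x = marg_moment N A 1 x + marg_moment N (- A) 1 x"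
    using marg_moment_add_Compl[OF assms] by (simp_all add: pois_marg_eq_marg_moment)
  moreover have "marg_moment N A 1 x + marg_moment N (- A) 1 x - b * (marg_moment N A 0 x + marg_moment N (- A) 0 x)
      = (marg_moment N A 1 x - b * marg_moment N A 0 x) + (marg_moment N (- A) 1 x - b * marg_moment N (- A) 0 x)"
    by (simp add: algebra_simps)
  ultimately show ?thesis
    by (simp only: pois_bayes_eq mult_power2_divide_sub_eq)
qed

end

section \<open>The regret bound\<close>

context pois_mixing
begin

lemma rho_sums: "(\<lambda>x. if K \<le> real x then pois_marg N x else 0) sums rho K N"
proof -
  have "summable (\<lambda>x. if K \<le> real x then pois_marg N x else 0)"
    by (intro summable_comparison_test[OF _ sums_summable[OF pois_marg_sums]])
       (auto simp: pois_marg_nonneg)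
  then show ?thesis
    by (simp add: rho_def summable_sums)
qed

lemma rho_nonneg: "0 \<le> rho K N"
  by (rule sums_le[OF _ sums_zero rho_sums]) (simp add: pois_marg_nonneg)

lemma suminf_shifted_power4_marg_moment_le:
  assumes "0 \<le> h" "0 \<le> c"
  shows "(\<Sum>x. ennreal ((real x + c) ^ 4 * marg_moment N {..h} 0 x)) \<le> ennreal (8 * (h + 3 * h ^ 2 + (h + c) ^ 4))"
proof -
  define W where "W = 8 * (h + 3 * h ^ 2 + (h + c) ^ 4)"
  have "(\<Sum>x. ennreal ((real x + c) ^ 4 * marg_moment N {..h} 0 x))
      = (\<integral>\<^sup>+t. ennreal (indicator {..h} t * t ^ 0) * (\<Sum>x. ennreal ((real x + c) ^ 4 * pois_pmf t x)) \<partial>N)"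
    using assms by (intro suminf_marg_moment) auto
  also have "\<dots> \<le> (\<integral>\<^sup>+t. ennreal W * indicator {..h} t \<partial>N)"
  proof (rule nn_integral_mono_AE)
    show "AE t in N. ennreal (indicator {..h} t * t ^ 0) * (\<Sum>x. ennreal ((real x + c) ^ 4 * pois_pmf t x))
        \<le> ennreal W * indicator {..h} t"
      using AE_nonneg
    proof eventually_elim
      case (elim t)
      show ?case
      proof (cases "t \<le> h")
        case True
        have "8 * (t + 3 * t ^ 2 + (t + c) ^ 4) \<le> W"
          unfolding W_def using True elim assms by (intro mult_left_mono add_mono power_mono) auto
        then have "(\<Sum>x. ennreal ((real x + c) ^ 4 * pois_pmf t x)) \<le> ennreal W"
          by (rule order_trans[OF suminf_pois_pmf_shifted_moment_4_le[OF elim] ennreal_leI])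
        then show ?thesis
          using True by simp
      qed simp
    qed
  qed
  also have "\<dots> = ennreal W * emeasure N {..h}"
    by (rule nn_integral_cmult_indicator) (simp add: sets_N)
  also have "\<dots> \<le> ennreal W * 1"
    by (intro mult_left_mono emeasure_le_1) simp
  finally show ?thesis
    by (simp add: W_def)
qed

lemma suminf_bulk_large_le:
  assumes "0 \<le> h" "0 \<le> c"
  shows "(\<Sum>x. ennreal (if K \<le> real x then (real x + c) ^ 2 * marg_moment N {..h} 0 x else 0))
    \<le> ennreal (2 * sqrt 2 * ((h + c) ^ 2 + sqrt (h + 3 * h ^ 2)) * sqrt (rho K N))"
proof -
  define w where "w x = (if K \<le> real x then marg_moment N {..h} 0 x else 0)" for x
  define W where "W = 8 * (h + 3 * h ^ 2 + ((h + c) ^ 2) ^ 2)"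
  have w: "0 \<le> w x" "w x \<le> (if K \<le> real x then pois_marg N x else 0)" for x
    by (simp_all add: w_def marg_moment_nonneg marg_moment_0_le_pois_marg)
  have "(\<Sum>x. ennreal (w x)) \<le> (\<Sum>x. ennreal (if K \<le> real x then pois_marg N x else 0))"
    using w by (intro suminf_le summableI ennreal_leI)
  also have "\<dots> = ennreal (rho K N)"
    by (intro suminf_ennreal_eq rho_sums) (simp add: pois_marg_nonneg)
  finally have mass: "(\<Sum>x. ennreal (w x)) \<le> ennreal (rho K N)" .
  have "(\<Sum>x. ennreal (w x * ((real x + c) ^ 2) ^ 2)) \<le> (\<Sum>x. ennreal ((real x + c) ^ 4 * marg_moment N {..h} 0 x))"
    by (intro suminf_le summableI ennreal_leI) (simp add: w_def marg_moment_nonneg flip: power_mult)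
  also have "\<dots> \<le> ennreal W"
    using suminf_shifted_power4_marg_moment_le[OF assms] by (simp add: W_def flip: power_mult)
  finally have fourth: "(\<Sum>x. ennreal (w x * ((real x + c) ^ 2) ^ 2)) \<le> ennreal W" .
  have "(\<Sum>x. ennreal (w x * (real x + c) ^ 2)) ^ 2
      \<le> (\<Sum>x. ennreal (w x)) * (\<Sum>x. ennreal (w x * ((real x + c) ^ 2) ^ 2))"
    by (rule Cauchy_Schwarz_suminf_weighted) (simp_all add: w(1))
  also have "\<dots> \<le> ennreal (rho K N) * ennreal W"
    by (rule mult_mono[OF mass fourth]) simp_all
  finally have "(\<Sum>x. ennreal (w x * (real x + c) ^ 2)) ^ 2 \<le> ennreal (rho K N) * ennreal W" .
  then have "(\<Sum>x. ennreal (w x * (real x + c) ^ 2)) \<le> ennreal (sqrt (rho K N * W))"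
    using rho_nonneg by (rule ennreal_le_sqrt_if_power2_le) (simp add: W_def assms)
  also have "\<dots> \<le> ennreal (2 * sqrt 2 * ((h + c) ^ 2 + sqrt (h + 3 * h ^ 2)) * sqrt (rho K N))"
  proof (rule ennreal_leI)
    have "sqrt W \<le> 2 * sqrt 2 * ((h + c) ^ 2 + sqrt (h + 3 * h ^ 2))"
      unfolding W_def by (rule sqrt_8_mult_le) (use assms in simp_all)
    then have "sqrt (rho K N) * sqrt W \<le> sqrt (rho K N) * (2 * sqrt 2 * ((h + c) ^ 2 + sqrt (h + 3 * h ^ 2)))"
      by (rule mult_left_mono) (simp add: rho_nonneg)
    then show "sqrt (rho K N * W) \<le> 2 * sqrt 2 * ((h + c) ^ 2 + sqrt (h + 3 * h ^ 2)) * sqrt (rho K N)"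
      by (simp add: real_sqrt_mult mult_ac)
  qed
  finally have "(\<Sum>x. ennreal (w x * (real x + c) ^ 2))
      \<le> ennreal (2 * sqrt 2 * ((h + c) ^ 2 + sqrt (h + 3 * h ^ 2)) * sqrt (rho K N))" .
  moreover have "w x * (real x + c) ^ 2 = (if K \<le> real x then (real x + c) ^ 2 * marg_moment N {..h} 0 x else 0)"
    for x
    by (simp add: w_def mult.commute)
  ultimately show ?thesis
    by simp
qed

lemma suminf_shifted_power2_marg_moment_le:
  assumes "A \<in> sets borel"
  shows "(\<Sum>x. ennreal ((real x + c) ^ 2 * marg_moment N A 0 x))
    \<le> 3 * (\<integral>\<^sup>+t. ennreal (indicator A t * t ^ 2) \<partial>N) + ennreal ((2 * c ^ 2 + 1 / 4) * measure N A)"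
proof -
  have [measurable]: "A \<in> sets borel"
    by (rule assms)
  have "(\<Sum>x. ennreal ((real x + c) ^ 2 * marg_moment N A 0 x))
      = (\<integral>\<^sup>+t. ennreal (indicator A t * t ^ 0) * (\<Sum>x. ennreal ((real x + c) ^ 2 * pois_pmf t x)) \<partial>N)"
    by (rule suminf_marg_moment[OF assms]) simp
  also have "\<dots> \<le> (\<integral>\<^sup>+t. 3 * ennreal (indicator A t * t ^ 2) + ennreal (2 * c ^ 2 + 1 / 4) * indicator A t \<partial>N)"
  proof (rule nn_integral_mono_AE)
    show "AE t in N. ennreal (indicator A t * t ^ 0) * (\<Sum>x. ennreal ((real x + c) ^ 2 * pois_pmf t x))
        \<le> 3 * ennreal (indicator A t * t ^ 2) + ennreal (2 * c ^ 2 + 1 / 4) * indicator A t"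
      using AE_nonneg
    proof eventually_elim
      case (elim t)
      have "(\<Sum>x. ennreal ((real x + c) ^ 2 * pois_pmf t x)) = ennreal ((t + c) ^ 2 + t)"
        by (rule suminf_ennreal_eq[OF _ pois_pmf_shifted_moment_2]) (simp add: pois_pmf_nonneg elim)
      also have "\<dots> \<le> ennreal (3 * t ^ 2 + (2 * c ^ 2 + 1 / 4))"
      proof (rule ennreal_leI)
        show "(t + c) ^ 2 + t \<le> 3 * t ^ 2 + (2 * c ^ 2 + 1 / 4)"
          using power2_add_le_weighted[of 1 t c] zero_le_power2[of "t - 1 / 2"]
          by (simp add: power2_eq_square algebra_simps)
      qed
      also have "\<dots> = 3 * ennreal (t ^ 2) + ennreal (2 * c ^ 2 + 1 / 4)"
        by (simp add: ennreal_mult')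
      finally show ?case
        by (cases "t \<in> A") simp_all
    qed
  qed
  also have "\<dots> = 3 * (\<integral>\<^sup>+t. ennreal (indicator A t * t ^ 2) \<partial>N) + ennreal (2 * c ^ 2 + 1 / 4) * emeasure N A"
  proof -
    have m: "(\<lambda>t. ennreal (indicator A t * t ^ 2)) \<in> borel_measurable N"
      by (rule borel_measurable_N) measurable
    moreover have "(\<lambda>t. ennreal (2 * c ^ 2 + 1 / 4) * indicator A t) \<in> borel_measurable N"
      by (rule borel_measurable_N) measurable
    ultimately show ?thesis
      using assms by (simp add: nn_integral_add nn_integral_cmult nn_integral_cmult_indicator sets_N)
  qed
  also have "\<dots> = 3 * (\<integral>\<^sup>+t. ennreal (indicator A t * t ^ 2) \<partial>N) + ennreal ((2 * c ^ 2 + 1 / 4) * measure N A)"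
    by (simp add: emeasure_eq_measure ennreal_mult')
  finally show ?thesis .
qed

lemma suminf_tail_le:
  assumes "(\<integral>\<^sup>+t. ennreal (t ^ 4) \<partial>N) \<le> ennreal M" "1 \<le> M"
  shows "(\<Sum>x. ennreal (2 * marg_moment N {h<..} 2 x + 2 * (real x + \<kappa>) ^ 2 * marg_moment N {h<..} 0 x))
    \<le> ennreal (2 * (1 + 6 * sqrt 15) * sqrt ((\<kappa> ^ 4 + M) * measure N {h<..}))"
proof -
  define e where "e = measure N {h<..}"
  define I where "I = (\<integral>\<^sup>+t. ennreal (indicator {h<..} t * t ^ 2) \<partial>N)"
  define s where "s = sqrt (e * M)"
  define c where "c = 2 * \<kappa> ^ 2 + 1 / 4"
  have e: "0 \<le> e" "e \<le> 1" and s: "0 \<le> s" and c: "0 \<le> c"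
    using assms by (simp_all add: e_def s_def c_def)
  have I: "I \<le> ennreal s"
    unfolding I_def s_def e_def
    using nn_integral_indicator_power2_le[of "{h<..}" "\<lambda>t. t" M] assms
    by (simp add: sets_N borel_measurable_N)
  have "(\<Sum>x. ennreal (2 * marg_moment N {h<..} 2 x + 2 * (real x + \<kappa>) ^ 2 * marg_moment N {h<..} 0 x))
      = 2 * (\<Sum>x. ennreal (marg_moment N {h<..} 2 x))
        + 2 * (\<Sum>x. ennreal ((real x + \<kappa>) ^ 2 * marg_moment N {h<..} 0 x))"
    by (simp add: marg_moment_nonneg ennreal_mult' mult.assoc suminf_add[OF summableI summableI, symmetric])
  also have "\<dots> \<le> 2 * I + 2 * (3 * I + ennreal (c * e))"
    using suminf_shifted_power2_marg_moment_le[of "{h<..}" \<kappa>]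
    by (intro add_mono mult_left_mono) (simp_all add: suminf_ennreal_marg_moment I_def c_def e_def)
  also have "\<dots> \<le> 2 * ennreal s + 2 * (3 * ennreal s + ennreal (c * e))"
    using I by (intro add_mono mult_left_mono) auto
  also have "\<dots> = ennreal (2 * s + 2 * (3 * s + c * e))"
  proof -
    have "0 \<le> 2 * s" "0 \<le> 2 * (3 * s + c * e)" "0 \<le> 3 * s" "0 \<le> c * e"
      using s c e by simp_all
    then show ?thesis
      by (simp only: ennreal_plus ennreal_mult' zero_le_numeral ennreal_numeral)
  qed
  also have "\<dots> \<le> ennreal (2 * (1 + 6 * sqrt 15) * sqrt ((\<kappa> ^ 4 + M) * e))"
    unfolding s_def c_def using tail_constant_le[OF e assms(2)] by (rule ennreal_leI)
  finally show ?thesis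
    by (simp add: e_def)
qed

lemma suminf_bulk_hellinger_le:
  assumes "pois_mixing G'"
  shows "(\<Sum>x. ennreal ((sqrt (marg_moment N {..h} 0 x) - sqrt (pois_marg G' x)) ^ 2))
    \<le> ennreal (8 / 3 * hellinger_sq (pois_marg N) (pois_marg G') + 4 * measure N {h<..})"
proof -
  interpret G': pois_mixing G'
    by (rule assms)
  define f g F0 F1
    where "f = pois_marg N" and "g = pois_marg G'"
      and "F0 = marg_moment N {..h} 0" and "F1 = marg_moment N {h<..} 0"
  have f: "f x = F0 x + F1 x" "0 \<le> F0 x" "0 \<le> F1 x" for x
    using marg_moment_add_Compl[of "{..h}" 0 x]
    by (simp_all add: f_def F0_def F1_def pois_marg_eq_marg_moment marg_moment_nonneg)
  have g: "0 \<le> g x" for x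
    by (simp add: g_def pois_marg_eq_marg_moment G'.marg_moment_nonneg)
  have pointwise: "(sqrt (F0 x) - sqrt (g x)) ^ 2 \<le> 4 / 3 * (sqrt (f x) - sqrt (g x)) ^ 2 + 4 * F1 x" for x
  proof -
    have "(sqrt (F0 x) - sqrt (g x)) ^ 2
        \<le> 4 * (sqrt (F0 x) - sqrt (f x)) ^ 2 + 4 / 3 * (sqrt (f x) - sqrt (g x)) ^ 2"
      using power2_add_le_weighted[of 3 "sqrt (F0 x) - sqrt (f x)" "sqrt (f x) - sqrt (g x)"] by simp
    moreover have "(sqrt (F0 x) - sqrt (f x)) ^ 2 \<le> F1 x"
      using power2_sqrt_diff_le[of "F0 x" "f x"] f[of x] by simp
    ultimately show ?thesis
      by linarith
  qed
  have "(\<lambda>x. 4 / 3 * (sqrt (f x) - sqrt (g x)) ^ 2 + 4 * F1 x)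
      sums (4 / 3 * (2 * hellinger_sq f g) + 4 * measure N {h<..})"
  proof (intro sums_add sums_mult hellinger_sq_sums)
    show "summable f" "summable g"
      using pois_marg_sums G'.pois_marg_sums by (auto simp: f_def g_def sums_summable)
    show "F1 sums measure N {h<..}"
      unfolding F1_def by (rule marg_moment_0_sums) simp
  qed (use f g in auto)
  then have "(\<Sum>x. ennreal (4 / 3 * (sqrt (f x) - sqrt (g x)) ^ 2 + 4 * F1 x))
      = ennreal (8 / 3 * hellinger_sq f g + 4 * measure N {h<..})"
    by (subst suminf_ennreal_eq) (use f in auto)
  moreover have "(\<Sum>x. ennreal ((sqrt (F0 x) - sqrt (g x)) ^ 2))
      \<le> (\<Sum>x. ennreal (4 / 3 * (sqrt (f x) - sqrt (g x)) ^ 2 + 4 * F1 x))"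
    using pointwise by (intro suminf_le summableI ennreal_leI)
  ultimately show ?thesis
    by (simp add: f_def g_def F0_def)
qed

lemma suminf_bulk_hellinger_shift_le:
  fixes h a a' :: real
  assumes "pois_mixing G'" "0 \<le> a" "0 \<le> a'"
  defines "D \<equiv> \<lambda>y. (sqrt (marg_moment N {..h} 0 y) - sqrt (pois_marg G' y)) ^ 2"
  shows "(\<Sum>x. ennreal (a * D (Suc x) + a' * D x))
    \<le> ennreal ((a + a') * (8 / 3 * hellinger_sq (pois_marg N) (pois_marg G') + 4 * measure N {h<..}))"
proof -
  have "ennreal (a * D (Suc x) + a' * D x) = ennreal a * ennreal (D (Suc x)) + ennreal a' * ennreal (D x)" for x
    using assms(2,3) by (simp add: D_def ennreal_mult')
  then have "(\<Sum>x. ennreal (a * D (Suc x) + a' * D x))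
      = ennreal a * (\<Sum>x. ennreal (D (Suc x))) + ennreal a' * (\<Sum>x. ennreal (D x))"
    by (simp add: suminf_add[OF summableI summableI, symmetric])
  also have "\<dots> \<le> ennreal a * (\<Sum>x. ennreal (D x)) + ennreal a' * (\<Sum>x. ennreal (D x))"
    using suminf_Suc_le_ennreal[of "\<lambda>x. ennreal (D x)"] by (intro add_mono mult_left_mono) auto
  also have "\<dots> = ennreal (a + a') * (\<Sum>x. ennreal (D x))"
    using assms(2,3) by (simp add: distrib_right)
  also have "\<dots> \<le> ennreal (a + a') * ennreal (8 / 3 * hellinger_sq (pois_marg N) (pois_marg G') + 4 * measure N {h<..})"
    using suminf_bulk_hellinger_le[OF assms(1), of h] by (intro mult_left_mono) (simp_all add: D_def)
  also have "\<dots> = ennreal ((a + a') * (8 / 3 * hellinger_sq (pois_marg N) (pois_marg G') + 4 * measure N {h<..}))"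
    using assms(2,3) by (simp add: ennreal_mult')
  finally show ?thesis .
qed

lemma pois_bayes_sq_error_pointwise_le:
  assumes G': "pois_mixing G'" and b_le: "pois_bayes G' x \<le> real x + \<kappa>"
    and "0 < h" "1 \<le> K" "0 \<le> \<kappa>"
  defines "F0 \<equiv> marg_moment N {..h} 0" and "F1 \<equiv> marg_moment N {h<..} 0"
    and "D \<equiv> \<lambda>y. sqrt (marg_moment N {..h} 0 y) - sqrt (pois_marg G' y)"
  shows "pois_marg N x * (pois_bayes N x - pois_bayes G' x) ^ 2
    \<le> 12 * (h + K + \<kappa>) * K * D (Suc x) ^ 2 + 9 / 2 * (h ^ 2 + (K + \<kappa>) ^ 2) * D x ^ 2
      + (if K \<le> real x then (real x + \<kappa> + h) ^ 2 * F0 x else 0)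
      + (2 * marg_moment N {h<..} 2 x + 2 * (real x + \<kappa>) ^ 2 * F1 x)"
proof -
  interpret G': pois_mixing G'
    by (rule G')
  define g b m0 m1 Q
    where "g = pois_marg G'" and "b = pois_bayes G' x"
      and "m0 = marg_moment N {..h} 1 x" and "m1 = marg_moment N {h<..} 1 x"
      and "Q = marg_moment N {h<..} 2 x"
  have F: "0 \<le> F0 y" "0 \<le> F1 y" for y
    by (simp_all add: F0_def F1_def marg_moment_nonneg)
  have m0: "0 \<le> m0" "m0 \<le> h * F0 x" "m0 = (real x + 1) * F0 (Suc x)"
    using marg_moment_1_le[of "{..h}" h x]
    by (simp_all add: m0_def F0_def marg_moment_nonneg marg_moment_Suc)
  have m1: "m1 ^ 2 \<le> F1 x * Q" "0 \<le> Q"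
    using marg_moment_Cauchy_Schwarz[of "{h<..}" x] by (simp_all add: m1_def F1_def Q_def marg_moment_nonneg)
  have g: "0 \<le> g y" for y
    by (simp add: g_def G'.pois_marg_nonneg)
  have b: "0 \<le> b" "b \<le> real x + \<kappa>" "(real x + 1) * g (Suc x) = b * g x"
    using G'.pois_bayes_nonneg G'.Suc_mult_pois_marg b_le by (simp_all add: b_def g_def)
  have "pois_marg N x * (pois_bayes N x - b) ^ 2 = ((m0 - b * F0 x) + (m1 - b * F1 x)) ^ 2 / (F0 x + F1 x)"
    using pois_marg_mult_power2_sub_eq[of "{..h}" x b] by (simp add: m0_def m1_def F0_def F1_def)
  also have "\<dots> \<le> (m0 - b * F0 x) ^ 2 / F0 x + (m1 - b * F1 x) ^ 2 / F1 x"
    by (rule power2_add_divide_le) (use F m0(1,2) m1(1) in auto)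
  also have "\<dots> \<le> (12 * (h + K + \<kappa>) * K * D (Suc x) ^ 2 + 9 / 2 * (h ^ 2 + (K + \<kappa>) ^ 2) * D x ^ 2
      + (if K \<le> real x then (real x + \<kappa> + h) ^ 2 * F0 x else 0))
      + (2 * Q + 2 * (real x + \<kappa>) ^ 2 * F1 x)"
  proof (rule add_mono)
    show "(m0 - b * F0 x) ^ 2 / F0 x \<le> 12 * (h + K + \<kappa>) * K * D (Suc x) ^ 2
        + 9 / 2 * (h ^ 2 + (K + \<kappa>) ^ 2) * D x ^ 2 + (if K \<le> real x then (real x + \<kappa> + h) ^ 2 * F0 x else 0)"
    proof -
      have "((real x + 1) * F0 (Suc x) - b * F0 x) ^ 2 / F0 x
          \<le> 12 * (h + K + \<kappa>) * K * (sqrt (F0 (Suc x)) - sqrt (g (Suc x))) ^ 2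
            + 9 / 2 * (h ^ 2 + (K + \<kappa>) ^ 2) * (sqrt (F0 x) - sqrt (g x)) ^ 2
            + (if K \<le> real x then (real x + \<kappa> + h) ^ 2 * F0 x else 0)"
        by (rule power2_sub_divide_le_bulk) (use F g b m0 assms in auto)
      then show ?thesis
        unfolding D_def F0_def[symmetric] g_def[symmetric] m0(3) .
    qed
    have "b ^ 2 \<le> (real x + \<kappa>) ^ 2"
      using b by (intro power_mono) auto
    then have "2 * Q + 2 * b ^ 2 * F1 x \<le> 2 * Q + 2 * (real x + \<kappa>) ^ 2 * F1 x"
      using F(2)[of x] by (simp add: mult_right_mono)
    with power2_sub_divide_le_Cauchy_Schwarz[OF F(2) m1(2,1)]
    show "(m1 - b * F1 x) ^ 2 / F1 x \<le> 2 * Q + 2 * (real x + \<kappa>) ^ 2 * F1 x"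
      by (rule order_trans)
  qed
  finally show ?thesis
    by (simp add: b_def Q_def)
qed

theorem pois_bayes_sq_error_le:
  assumes G': "pois_mixing G'" and b_le: "\<forall>x. pois_bayes G' x \<le> real x + \<kappa>"
    and moment: "(\<integral>\<^sup>+t. ennreal (t ^ 4) \<partial>N) \<le> ennreal M" "1 \<le> M"
    and "0 < h" "1 \<le> K" "0 \<le> \<kappa>"
  shows "(\<Sum>x. ennreal (pois_marg N x * (pois_bayes N x - pois_bayes G' x) ^ 2))
    \<le> ennreal (12 * (h ^ 2 + (K + \<kappa>) ^ 2) + 48 * (h + K + \<kappa>) * K)
        * (ennreal (hellinger_sq (pois_marg N) (pois_marg G')) + ennreal (4 * measure N {h<..}))
      + ennreal (2 * sqrt 2 * ((2 * h + \<kappa>) ^ 2 + sqrt (h + 3 * h ^ 2)) * sqrt (rho K N)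
        + 2 * (1 + 6 * sqrt 15) * sqrt ((\<kappa> ^ 4 + M) * measure N {h<..}))"
proof -
  interpret G': pois_mixing G'
    by (rule G')
  define A1 A2 where "A1 = 12 * (h + K + \<kappa>) * K" and "A2 = 9 / 2 * (h ^ 2 + (K + \<kappa>) ^ 2)"
  define H e where "H = hellinger_sq (pois_marg N) (pois_marg G')" and "e = measure N {h<..}"
  define R T where "R = 2 * sqrt 2 * ((2 * h + \<kappa>) ^ 2 + sqrt (h + 3 * h ^ 2)) * sqrt (rho K N)"
    and "T = 2 * (1 + 6 * sqrt 15) * sqrt ((\<kappa> ^ 4 + M) * e)"
  define D where "D y = (sqrt (marg_moment N {..h} 0 y) - sqrt (pois_marg G' y)) ^ 2" for y
  define bulk where "bulk x = (if K \<le> real x then (real x + \<kappa> + h) ^ 2 * marg_moment N {..h} 0 x else 0)" for x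
  define tail where "tail x = 2 * marg_moment N {h<..} 2 x + 2 * (real x + \<kappa>) ^ 2 * marg_moment N {h<..} 0 x" for x
  have A: "0 \<le> A1" "0 \<le> A2"
    using assms by (simp_all add: A1_def A2_def)
  have "(\<Sum>x. ennreal (pois_marg N x * (pois_bayes N x - pois_bayes G' x) ^ 2))
      \<le> (\<Sum>x. ennreal (A1 * D (Suc x) + A2 * D x)) + (\<Sum>x. ennreal (bulk x)) + (\<Sum>x. ennreal (tail x))"
  proof (rule suminf_ennreal_le_add3)
    show "pois_marg N x * (pois_bayes N x - pois_bayes G' x) ^ 2 \<le> (A1 * D (Suc x) + A2 * D x) + bulk x + tail x"
      for x
      unfolding A1_def A2_def D_def bulk_def tail_def
      by (rule pois_bayes_sq_error_pointwise_le[OF G' b_le[rule_format] assms(5-7)])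
  qed (use A in \<open>simp_all add: D_def bulk_def tail_def marg_moment_nonneg\<close>)
  also have "\<dots> \<le> ennreal ((A1 + A2) * (8 / 3 * H + 4 * e)) + ennreal R + ennreal T"
  proof (intro add_mono)
    show "(\<Sum>x. ennreal (A1 * D (Suc x) + A2 * D x)) \<le> ennreal ((A1 + A2) * (8 / 3 * H + 4 * e))"
      unfolding D_def H_def e_def by (rule suminf_bulk_hellinger_shift_le[OF G' A])
    have eq: "real x + (\<kappa> + h) = real x + \<kappa> + h" "h + (\<kappa> + h) = 2 * h + \<kappa>" for x
      by simp_all
    have "(\<Sum>x. ennreal (if K \<le> real x then (real x + (\<kappa> + h)) ^ 2 * marg_moment N {..h} 0 x else 0))
        \<le> ennreal (2 * sqrt 2 * ((h + (\<kappa> + h)) ^ 2 + sqrt (h + 3 * h ^ 2)) * sqrt (rho K N))"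
      by (rule suminf_bulk_large_le) (use assms in auto)
    then show "(\<Sum>x. ennreal (bulk x)) \<le> ennreal R"
      unfolding bulk_def R_def eq .
    show "(\<Sum>x. ennreal (tail x)) \<le> ennreal T"
      using suminf_tail_le[OF moment, of h \<kappa>] by (simp add: tail_def T_def e_def)
  qed
  also have "\<dots> \<le> ennreal (12 * (h ^ 2 + (K + \<kappa>) ^ 2) + 48 * (h + K + \<kappa>) * K)
      * (ennreal H + ennreal (4 * e)) + ennreal (R + T)"
  proof -
    have "0 \<le> H"
      unfolding H_def using pois_marg_sums G'.pois_marg_sums
      by (intro hellinger_sq_nonneg) (auto simp: pois_marg_nonneg G'.pois_marg_nonneg sums_summable)
    moreover have "0 \<le> e" "0 \<le> R" "0 \<le> T"
      using rho_nonneg assms by (simp_all add: e_def R_def T_def)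
    ultimately show ?thesis
      using bulk_constant_le[of h K \<kappa> H e] assms
      by (simp add: A1_def A2_def ennreal_mult'[symmetric] add.assoc flip: ennreal_plus)
  qed
  finally show ?thesis
    by (simp add: H_def e_def R_def T_def)
qed

end

lemma borel_measurable_pois_marg_comp:
  assumes "Ghat \<in> \<Omega> \<rightarrow>\<^sub>M subprob_algebra borel"
  shows "(\<lambda>\<omega>. pois_marg (Ghat \<omega>) x) \<in> borel_measurable \<Omega>"
proof -
  have "(\<lambda>N. \<integral>t. pois_pmf t x \<partial>N) \<in> subprob_algebra borel \<rightarrow>\<^sub>M borel"
    by (rule integral_measurable_subprob_algebra) measurable
  from measurable_compose[OF assms this] show ?thesis
    by (simp add: pois_marg_def pois_pmf_def)
qed

theorem lemmaD2:
  fixes G :: "real measure" and \<Omega> :: "'w measure" and Ghat :: "'w \<Rightarrow> real measure"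
    and M \<kappa> h K :: real
  assumes "prob_space G" and "sets G = sets borel" and "AE \<theta> in G. 0 \<le> \<theta>"
    and "(\<integral>\<^sup>+\<theta>. ennreal (\<theta> ^ 4) \<partial>G) \<le> ennreal M" and "M \<ge> 1"
    and "prob_space \<Omega>"
    and "Ghat \<in> \<Omega> \<rightarrow>\<^sub>M subprob_algebra borel"
    and "\<forall>\<omega>\<in>space \<Omega>. prob_space (Ghat \<omega>) \<and> sets (Ghat \<omega>) = sets borel \<and> (AE \<theta> in Ghat \<omega>. 0 \<le> \<theta>)"
    and "\<kappa> > 0"
    and "AE \<omega> in \<Omega>. \<forall>x. pois_bayes (Ghat \<omega>) x \<le> real x + \<kappa>"
    and "h > 0" and "measure G {0..h} > 1/2" and "K \<ge> 1"
  shows "(\<integral>\<^sup>+\<omega>. (\<Sum>x. ennreal (pois_marg G x * (pois_bayes G x - pois_bayes (Ghat \<omega>) x)^2)) \<partial>\<Omega>)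
    \<le> ennreal (12 * (h^2 + (K + \<kappa>)^2) + 48 * (h + K + \<kappa>) * K)
        * ((\<integral>\<^sup>+\<omega>. ennreal (hellinger_sq (pois_marg G) (pois_marg (Ghat \<omega>))) \<partial>\<Omega>)
           + ennreal (4 * measure G {h<..}))
      + ennreal (2 * sqrt 2 * ((2*h + \<kappa>)^2 + sqrt (h + 3 * h^2)) * sqrt (rho K G)
           + 2 * (1 + 6 * sqrt 15) * sqrt ((\<kappa>^4 + M) * measure G {h<..}))"
proof -
  interpret G: pois_mixing G
    using assms(1-3) by (intro pois_mixing.intro pois_mixing_axioms.intro)
  have Ghat: "pois_mixing (Ghat \<omega>)" if "\<omega> \<in> space \<Omega>" for \<omega>
    using assms(8) that by (auto intro!: pois_mixing.intro pois_mixing_axioms.intro)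
  have [measurable]: "(\<lambda>\<omega>. pois_marg (Ghat \<omega>) x) \<in> borel_measurable \<Omega>" for x
    by (rule borel_measurable_pois_marg_comp[OF assms(7)])
  define H where "H \<omega> = ennreal (hellinger_sq (pois_marg G) (pois_marg (Ghat \<omega>)))" for \<omega>
  define C e R
    where "C = ennreal (12 * (h^2 + (K + \<kappa>)^2) + 48 * (h + K + \<kappa>) * K)"
      and "e = ennreal (4 * measure G {h<..})"
      and "R = ennreal (2 * sqrt 2 * ((2*h + \<kappa>)^2 + sqrt (h + 3 * h^2)) * sqrt (rho K G)
           + 2 * (1 + 6 * sqrt 15) * sqrt ((\<kappa>^4 + M) * measure G {h<..}))"
  have H [measurable]: "H \<in> borel_measurable \<Omega>"
    unfolding H_def hellinger_sq_def by measurable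
  have "(\<integral>\<^sup>+\<omega>. (\<Sum>x. ennreal (pois_marg G x * (pois_bayes G x - pois_bayes (Ghat \<omega>) x)^2)) \<partial>\<Omega>)
      \<le> (\<integral>\<^sup>+\<omega>. C * (H \<omega> + e) + R \<partial>\<Omega>)"
  proof (rule nn_integral_mono_AE)
    show "AE \<omega> in \<Omega>. (\<Sum>x. ennreal (pois_marg G x * (pois_bayes G x - pois_bayes (Ghat \<omega>) x)^2))
        \<le> C * (H \<omega> + e) + R"
      using assms(10) AE_space
    proof eventually_elim
      case (elim \<omega>)
      then show ?case
        unfolding C_def H_def e_def R_def
        using G.pois_bayes_sq_error_le[OF Ghat _ assms(4,5,11,13)] assms(9) by simp
    qed
  qed
  also have "\<dots> = C * ((\<integral>\<^sup>+\<omega>. H \<omega> \<partial>\<Omega>) + e) + R"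
    using prob_space.emeasure_space_1[OF assms(6)] by (simp add: nn_integral_add nn_integral_cmult)
  finally show ?thesis
    by (simp add: C_def H_def e_def R_def)
qed

end
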